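(* Let $1\le k\le n$ and $\rho=\sum_{i=0}^k\lambda_i|D_n^i\rangle\langle D_n^i|$ with $\lambda_i\ge0$, $\sum_{i=0}^k\lambda_i=1$; set $\lambda_i=0$ for $k<i\le n$. Then $L(\rho)\le k$ if and only if the only solution $(a_0,\dots,a_n)$ with all $a_i\ge0$ of the linear system $$\sum_{i=0}^n a_{i}\frac{\binom{k}{s}\binom{n-k}{i-s}}{\binom{n}{i}}=\sum_{i=0}^k\lambda_i\frac{\binom{k}{s}\binom{n-k}{i-s}}{\binom{n}{i}},\qquad 0\le s\le k,$$ is $(a_0,\dots,a_n)=(\lambda_0,\dots,\lambda_k,0,\dots,0)$.
   Context: Convention: $\binom{m}{i}=0$ if $i<0$ or $i>m$. Dicke states: $|D_n^i\rangle=\binom{n}{i}^{-1/2}\sum_{s\in\{0,1\}^n,\ \sum_js_j=i}|s_1\rangle\otimes\cdots\otimes|s_n\rangle$. For $S\subseteq[n]$, $\rho_S$ is the partial trace of $\rho$ over qubits outside $S$; $\mathcal C(\rho,\mathcal S)=\{\sigma\text{ density matrix}:\sigma_S=\rho_S\ \forall S\in\mathcal S\}$; $\mathcal S$ determines $\rho$ if $\mathcal C(\rho,\mathcal S)=\{\rho\}$; $L(\rho)=\min_{\mathcal S\text{ determines }\rho}\max_{S\in\mathcal S}|S|$. *)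

theory Defs
  imports Complex_Main
begin

text \<open>n-qubit computational basis states |s_1 ... s_n> are indexed by subsets
  A of {0..<n}: qubit j is in state 1 iff j in A.\<close>

type_synonym qop = "nat set \<Rightarrow> nat set \<Rightarrow> complex"

definition basis_idx :: "nat \<Rightarrow> nat set set" where
  "basis_idx n = Pow {0..<n}"

definition density :: "nat \<Rightarrow> qop \<Rightarrow> bool" where
  "density n M \<longleftrightarrow>
     (\<forall>A B. (A \<notin> basis_idx n \<or> B \<notin> basis_idx n) \<longrightarrow> M A B = 0) \<and>
     (\<forall>A\<in>basis_idx n. \<forall>B\<in>basis_idx n. M B A = cnj (M A B)) \<and>
     (\<forall>v :: nat set \<Rightarrow> complex.
        (\<Sum>A\<in>basis_idx n. \<Sum>B\<in>basis_idx n. cnj (v A) * M A B * v B) \<in> \<real> \<and>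
        Re (\<Sum>A\<in>basis_idx n. \<Sum>B\<in>basis_idx n. cnj (v A) * M A B * v B) \<ge> 0) \<and>
     (\<Sum>A\<in>basis_idx n. M A A) = 1"

text \<open>Partial trace over the qubits outside S (S a subset of {0..<n}); the result
  is an operator on the qubits in S, indexed by subsets of S.\<close>
definition marginal :: "nat \<Rightarrow> qop \<Rightarrow> nat set \<Rightarrow> qop" where
  "marginal n M S = (\<lambda>A B. if A \<subseteq> S \<and> B \<subseteq> S
      then (\<Sum>C\<in>Pow ({0..<n} - S). M (A \<union> C) (B \<union> C)) else 0)"

definition compatible :: "nat \<Rightarrow> qop \<Rightarrow> nat set set \<Rightarrow> qop set" where
  "compatible n \<rho> \<S> = {\<sigma>. density n \<sigma> \<and> (\<forall>S\<in>\<S>. marginal n \<sigma> S = marginal n \<rho> S)}"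

definition determines :: "nat \<Rightarrow> nat set set \<Rightarrow> qop \<Rightarrow> bool" where
  "determines n \<S> \<rho> \<longleftrightarrow> \<S> \<subseteq> Pow {0..<n} \<and> compatible n \<rho> \<S> = {\<rho>}"

definition Lnum :: "nat \<Rightarrow> qop \<Rightarrow> nat" where
  "Lnum n \<rho> = (LEAST m. \<exists>\<S>. determines n \<S> \<rho> \<and> (\<forall>S\<in>\<S>. card S \<le> m))"

definition dicke :: "nat \<Rightarrow> nat \<Rightarrow> nat set \<Rightarrow> complex" where
  "dicke n i A = (if A \<in> basis_idx n \<and> card A = i
                  then complex_of_real (1 / sqrt (real (n choose i))) else 0)"

definition dicke_mixture :: "nat \<Rightarrow> nat \<Rightarrow> (nat \<Rightarrow> real) \<Rightarrow> qop" where
  "dicke_mixture n k lam = (\<lambda>A B.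
     \<Sum>i\<le>k. complex_of_real (lam i) * dicke n i A * cnj (dicke n i B))"

definition ibinom :: "nat \<Rightarrow> int \<Rightarrow> nat" where
  "ibinom m j = (if j < 0 then 0 else m choose nat j)"

definition coef :: "nat \<Rightarrow> nat \<Rightarrow> nat \<Rightarrow> nat \<Rightarrow> real" where
  "coef n k i s = real (k choose s) * real (ibinom (n - k) (int i - int s)) / real (n choose i)"

end

theory Submission
  imports Defs
begin

text \<open>Write \<open>\<rho> = \<Sum>\<^sub>i b\<^sub>i |D\<^sub>n\<^sup>i\<rangle>\<langle>D\<^sub>n\<^sup>i|\<close>. The linear system says exactly that the diagonal of
  every \<open>k\<close>-qubit marginal of \<open>\<Sum>\<^sub>i a\<^sub>i |D\<^sub>n\<^sup>i\<rangle>\<langle>D\<^sub>n\<^sup>i|\<close> agrees with that of \<open>\<rho>\<close>;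
  for these permutation invariant operators, which are diagonal in the Dicke basis, this means
  that all their marginals on at most \<open>k\<close> qubits agree.

  If \<open>L(\<rho>) \<le> k\<close>, a nonnegative solution \<open>a\<close> yields a state with the same marginals on all
  sets of at most \<open>k\<close> qubits, hence equal to \<open>\<rho>\<close>, so \<open>a = b\<close>.

  Conversely, let \<open>\<sigma>\<close> share all \<open>k\<close>-qubit marginals with \<open>\<rho>\<close>. Double counting shows that the
  traces of \<open>\<sigma>\<close> on the Hamming weight layers form a nonnegative solution, hence equal \<open>b\<close>;
  so \<open>\<sigma>\<close> vanishes beyond weight \<open>k\<close>. Positivity then forces \<open>\<sigma>\<close> to be invariant under
  transpositions of qubits (for \<open>k = 1\<close> uniqueness forces \<open>\<rho> = |0\<dots>0\<rangle>\<langle>0\<dots>0|\<close> instead),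
  and a permutation invariant operator vanishing beyond weight \<open>k\<close> is determined by one
  \<open>k\<close>-qubit marginal.\<close>

lemma choose_mult_swap:
  fixes N p q :: nat
  shows "(N choose p) * ((N - p) choose q) = (N choose q) * ((N - q) choose p)"
proof (cases "p + q \<le> N")
  case True
  have "(N choose (p + q)) * ((p + q) choose p) = (N choose p) * ((N - p) choose q)"
    using choose_mult[of p "p + q" N] True by simp
  moreover have "(N choose (p + q)) * ((p + q) choose q) = (N choose q) * ((N - q) choose p)"
    using choose_mult[of q "p + q" N] True by simp
  moreover have "(p + q) choose p = (p + q) choose q"
    using binomial_symmetric[of p "p + q"] by simp
  ultimately show ?thesis by simp
next
  case False
  then have "(N choose p) * ((N - p) choose q) = 0" "(N choose q) * ((N - q) choose p) = 0"
    by (cases "p \<le> N"; cases "q \<le> N"; simp)+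
  then show ?thesis by (simp only:)
qed

lemma choose_ibinom_eq:
  assumes "i \<le> n" "s \<le> k" "k \<le> n"
  shows "(n choose k) * (k choose s) * ibinom (n - k) (int i - int s)
       = (n choose i) * (i choose s) * ((n - i) choose (k - s))"
proof (cases "s \<le> i")
  case False
  then show ?thesis by (simp add: ibinom_def)
next
  case True
  have ib: "ibinom (n - k) (int i - int s) = (n - k) choose (i - s)"
    using True by (simp add: ibinom_def nat_diff_distrib)
  have a: "(n choose k) * (k choose s) = (n choose s) * ((n - s) choose (k - s))"
    using choose_mult[of s k n] assms by simp
  have b: "(n choose i) * (i choose s) = (n choose s) * ((n - s) choose (i - s))"
    using choose_mult[of s i n] assms True by simp
  have c: "((n - s) choose (k - s)) * ((n - k) choose (i - s))
         = ((n - s) choose (i - s)) * ((n - i) choose (k - s))"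
    using choose_mult_swap[of "n - s" "k - s" "i - s"] assms True
    by (metis diff_diff_cancel diff_le_self diff_diff_left le_add_diff_inverse)
  show ?thesis unfolding ib by (metis a b c mult.assoc)
qed

lemma coef_eq_hypergeometric:
  assumes "i \<le> n" "s \<le> k" "k \<le> n"
  shows "coef n k i s = real (i choose s) * real ((n - i) choose (k - s)) / real (n choose k)"
proof -
  have "real ((n choose k) * (k choose s) * ibinom (n - k) (int i - int s))
       = real ((n choose i) * (i choose s) * ((n - i) choose (k - s)))"
    using choose_ibinom_eq[OF assms] by simp
  moreover have "real (n choose k) > 0" "real (n choose i) > 0" using assms by auto
  ultimately show ?thesis unfolding coef_def by (simp add: field_simps)
qed

definition subsets_of_card :: "'a set \<Rightarrow> nat \<Rightarrow> 'a set set" where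
  "subsets_of_card T i = {B. B \<subseteq> T \<and> card B = i}"

lemma finite_subsets_of_card: "finite T \<Longrightarrow> finite (subsets_of_card T i)"
  unfolding subsets_of_card_def by (rule finite_subset[of _ "Pow T"]) auto

lemma card_subsets_of_card: "finite T \<Longrightarrow> card (subsets_of_card T i) = card T choose i"
  unfolding subsets_of_card_def by (rule n_subsets)

lemma subsets_of_card_basis_idx: "X \<in> subsets_of_card {0..<n} i \<Longrightarrow> X \<in> basis_idx n"
  by (auto simp: subsets_of_card_def basis_idx_def)

lemma sum_Pow_by_card:
  assumes "finite T"
  shows "(\<Sum>C\<in>Pow T. h C) = (\<Sum>j\<le>card T. \<Sum>C\<in>subsets_of_card T j. h C)"
proof -
  have "(\<Sum>j\<le>card T. \<Sum>C\<in>{x. x \<in> Pow T \<and> card x = j}. h C) = (\<Sum>C\<in>Pow T. h C)"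
    by (rule sum.group) (use assms card_mono in auto)
  moreover have "{x. x \<in> Pow T \<and> card x = j} = subsets_of_card T j" for j
    unfolding subsets_of_card_def by auto
  ultimately show ?thesis by simp
qed

lemma sum_Pow_atLeastLessThan_by_card:
  "(\<Sum>C\<in>Pow {0..<n}. h C) = (\<Sum>j\<le>n. \<Sum>C\<in>subsets_of_card {0..<n} j. h C)"
  using sum_Pow_by_card[of "{0..<n}" h] by simp

lemma sum_Pow_card_fun:
  fixes g :: "nat \<Rightarrow> 'a::comm_semiring_1"
  assumes "finite T"
  shows "(\<Sum>C\<in>Pow T. g (card C)) = (\<Sum>j\<le>card T. of_nat (card T choose j) * g j)"
proof -
  have "(\<Sum>C\<in>Pow T. g (card C)) = (\<Sum>j\<le>card T. \<Sum>C\<in>subsets_of_card T j. g (card C))"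
    by (rule sum_Pow_by_card[OF assms])
  also have "\<dots> = (\<Sum>j\<le>card T. \<Sum>C\<in>subsets_of_card T j. g j)"
    by (rule sum.cong) (auto simp: subsets_of_card_def)
  also have "\<dots> = (\<Sum>j\<le>card T. of_nat (card T choose j) * g j)"
    by (simp add: card_subsets_of_card[OF assms])
  finally show ?thesis .
qed

lemma inj_on_union_split:
  assumes "\<forall>A\<in>T1. A \<subseteq> S" "\<forall>C\<in>T2. C \<inter> S = {}"
  shows "inj_on (\<lambda>(A, C). A \<union> C) (T1 \<times> T2)"
proof (rule inj_onI)
  fix p q assume pq: "p \<in> T1 \<times> T2" "q \<in> T1 \<times> T2" "(\<lambda>(A, C). A \<union> C) p = (\<lambda>(A, C). A \<union> C) q"
  obtain A C A' C' where e: "p = (A, C)" "q = (A', C')" by (cases p, cases q)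
  from pq(1,2) have "A = (A \<union> C) \<inter> S" "A' = (A' \<union> C') \<inter> S" "C = (A \<union> C) - S" "C' = (A' \<union> C') - S"
    unfolding e using assms by auto
  moreover have "A \<union> C = A' \<union> C'" using pq(3) unfolding e by simp
  ultimately show "p = q" unfolding e by metis
qed

lemma card_subsets_of_card_meeting:
  assumes X: "X \<subseteq> {0..<n}" and s: "s \<le> k"
  shows "card {S \<in> subsets_of_card {0..<n} k. card (X \<inter> S) = s}
       = (card X choose s) * ((n - card X) choose (k - s))"
proof -
  let ?h = "\<lambda>(P, R). P \<union> R"
  let ?T = "subsets_of_card X s \<times> subsets_of_card ({0..<n} - X) (k - s)"
  have fX: "finite X" using X finite_subset by auto
  have inj: "inj_on ?h ?T"
    by (rule inj_on_union_split[where S=X]) (auto simp: subsets_of_card_def)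
  have img: "?h ` ?T = {S \<in> subsets_of_card {0..<n} k. card (X \<inter> S) = s}"
  proof
    show "?h ` ?T \<subseteq> {S \<in> subsets_of_card {0..<n} k. card (X \<inter> S) = s}"
    proof
      fix x assume "x \<in> ?h ` ?T"
      then obtain A C where xe: "x = A \<union> C" and A: "A \<in> subsets_of_card X s"
        and C: "C \<in> subsets_of_card ({0..<n} - X) (k - s)" by auto
      have fA: "finite A" "finite C" using A C fX finite_subset by (auto simp: subsets_of_card_def)
      have dj: "A \<inter> C = {}" using A C by (auto simp: subsets_of_card_def)
      have "card (A \<union> C) = k" using card_Un_disjoint[OF fA dj] A C s by (auto simp: subsets_of_card_def)
      moreover have "X \<inter> (A \<union> C) = A" using A C by (auto simp: subsets_of_card_def)
      ultimately show "x \<in> {S \<in> subsets_of_card {0..<n} k. card (X \<inter> S) = s}"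
        using A C X xe by (auto simp: subsets_of_card_def)
    qed
    show "{S \<in> subsets_of_card {0..<n} k. card (X \<inter> S) = s} \<subseteq> ?h ` ?T"
    proof
      fix S assume S: "S \<in> {S \<in> subsets_of_card {0..<n} k. card (X \<inter> S) = s}"
      have fS: "finite S" using S finite_subset by (auto simp: subsets_of_card_def)
      have "card (S - X) = card S - card (S \<inter> X)" using fS by (simp add: card_Diff_subset_Int)
      also have "\<dots> = k - s" using S by (auto simp: subsets_of_card_def Int_commute)
      finally have "S = ?h (X \<inter> S, S - X)" "(X \<inter> S, S - X) \<in> ?T"
        using S by (auto simp: subsets_of_card_def)
      then show "S \<in> ?h ` ?T" by blast
    qed
  qed
  have "card ({0..<n} - X) = n - card X" using X by (simp add: card_Diff_subset fX)
  then have "card ?T = (card X choose s) * ((n - card X) choose (k - s))"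
    by (simp add: card_cartesian_product card_subsets_of_card fX)
  then show ?thesis using card_image[OF inj] img by simp
qed

definition sesq :: "nat \<Rightarrow> qop \<Rightarrow> (nat set \<Rightarrow> complex) \<Rightarrow> (nat set \<Rightarrow> complex) \<Rightarrow> complex" where
  "sesq n M u v = (\<Sum>A\<in>basis_idx n. \<Sum>B\<in>basis_idx n. cnj (u A) * M A B * v B)"

definition basis_vec :: "nat set \<Rightarrow> nat set \<Rightarrow> complex" where
  "basis_vec Z = (\<lambda>X. if X = Z then 1 else 0)"

lemma finite_basis_idx [simp]: "finite (basis_idx n)"
  by (simp add: basis_idx_def)

lemma density_outside:
  "density n M \<Longrightarrow> A \<notin> basis_idx n \<or> B \<notin> basis_idx n \<Longrightarrow> M A B = 0"
  unfolding density_def by blast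

lemma density_hermitian:
  "density n M \<Longrightarrow> A \<in> basis_idx n \<Longrightarrow> B \<in> basis_idx n \<Longrightarrow> M B A = cnj (M A B)"
  unfolding density_def by blast

lemma sesq_self_nonneg:
  assumes "density n M"
  shows "sesq n M v v \<in> \<real>" "Re (sesq n M v v) \<ge> 0"
  using assms unfolding density_def sesq_def by blast+

lemma sesq_add_scaled:
  "sesq n M (\<lambda>X. u X + t * w X) (\<lambda>X. u X + t * w X)
     = sesq n M u u + t * sesq n M u w + cnj t * sesq n M w u + cnj t * t * sesq n M w w"
proof -
  have "cnj (u A + t * w A) * M A B * (u B + t * w B) =
     cnj (u A) * M A B * u B + t * (cnj (u A) * M A B * w B) + cnj t * (cnj (w A) * M A B * u B)
     + cnj t * t * (cnj (w A) * M A B * w B)" for A B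
    by (simp add: algebra_simps)
  then show ?thesis
    unfolding sesq_def by (simp only: sum.distrib sum_distrib_left)
qed

lemma sesq_diff_right:
  "sesq n M u (\<lambda>X. v X - w X) = sesq n M u v - sesq n M u w"
  unfolding sesq_def by (simp add: right_diff_distrib sum_subtractf)

lemma sesq_diff_left:
  "sesq n M (\<lambda>X. v X - w X) u = sesq n M v u - sesq n M w u"
  unfolding sesq_def by (simp add: left_diff_distrib sum_subtractf)

lemma sesq_swap:
  assumes "density n M"
  shows "sesq n M w u = cnj (sesq n M u w)"
proof -
  have "cnj (sesq n M u w) = (\<Sum>A\<in>basis_idx n. \<Sum>B\<in>basis_idx n. u A * cnj (M A B) * cnj (w B))"
    unfolding sesq_def by simp
  also have "\<dots> = (\<Sum>A\<in>basis_idx n. \<Sum>B\<in>basis_idx n. u A * M B A * cnj (w B))"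
    by (intro sum.cong refl) (metis density_hermitian[OF assms])
  also have "\<dots> = (\<Sum>B\<in>basis_idx n. \<Sum>A\<in>basis_idx n. u A * M B A * cnj (w B))"
    by (rule sum.swap)
  also have "\<dots> = sesq n M w u"
    unfolding sesq_def by (intro sum.cong refl) (simp add: algebra_simps)
  finally show ?thesis by simp
qed

text \<open>If \<open>\<langle>w, M w\<rangle> = 0\<close> but \<open>\<beta> = \<langle>u, M w\<rangle> \<noteq> 0\<close>, then along \<open>u - r \<beta>\<^sup>* w\<close> the form
  decreases linearly in \<open>r\<close> and eventually becomes negative.\<close>
lemma sesq_eq_0_if_sesq_self_eq_0:
  assumes d: "density n M" and q: "sesq n M w w = 0"
  shows "sesq n M u w = 0"
proof (rule ccontr)
  define \<beta> where "\<beta> = sesq n M u w"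
  assume "sesq n M u w \<noteq> 0"
  then have cpos: "(cmod \<beta>)\<^sup>2 > 0" unfolding \<beta>_def by simp
  define r where "r = (Re (sesq n M u u) + 1) / (2 * (cmod \<beta>)\<^sup>2)"
  define t where "t = - complex_of_real r * cnj \<beta>"
  have expand: "sesq n M (\<lambda>X. u X + t * w X) (\<lambda>X. u X + t * w X)
      = sesq n M u u + (t * \<beta> + cnj t * cnj \<beta>)"
    using sesq_add_scaled[of n M u t w] q sesq_swap[OF d, of w u] unfolding \<beta>_def by simp
  have "t * \<beta> + cnj t * cnj \<beta> = - (complex_of_real (2 * r) * (\<beta> * cnj \<beta>))"
    unfolding t_def by (simp add: algebra_simps)
  also have "\<dots> = - complex_of_real (2 * r * (cmod \<beta>)\<^sup>2)"
    by (simp only: complex_norm_square[symmetric] of_real_mult)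
  finally have "Re (sesq n M (\<lambda>X. u X + t * w X) (\<lambda>X. u X + t * w X))
      = Re (sesq n M u u) - 2 * r * (cmod \<beta>)\<^sup>2"
    unfolding expand by simp
  also have "\<dots> = -1"
    unfolding r_def using cpos by (simp add: field_simps)
  finally show False using sesq_self_nonneg(2)[OF d, of "\<lambda>X. u X + t * w X"] by simp
qed

lemma sesq_basis_vec_left:
  assumes "Z \<in> basis_idx n"
  shows "sesq n M (basis_vec Z) w = (\<Sum>B\<in>basis_idx n. M Z B * w B)"
proof -
  have "sesq n M (basis_vec Z) w
      = (\<Sum>A\<in>basis_idx n. if A = Z then (\<Sum>B\<in>basis_idx n. M A B * w B) else 0)"
    unfolding sesq_def by (intro sum.cong refl) (auto simp: basis_vec_def)
  then show ?thesis using assms by (simp add: sum.delta)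
qed

lemma sesq_basis_vec:
  assumes "Z \<in> basis_idx n" "X \<in> basis_idx n"
  shows "sesq n M (basis_vec Z) (basis_vec X) = M Z X"
proof -
  have "sesq n M (basis_vec Z) (basis_vec X) = (\<Sum>B\<in>basis_idx n. if B = X then M Z B else 0)"
    unfolding sesq_basis_vec_left[OF assms(1)] by (intro sum.cong refl) (auto simp: basis_vec_def)
  then show ?thesis using assms by (simp add: sum.delta)
qed

lemma density_diag_nonneg:
  assumes "density n M" "X \<in> basis_idx n"
  shows "M X X \<in> \<real>" "Re (M X X) \<ge> 0"
  using sesq_self_nonneg[OF assms(1), of "basis_vec X"] sesq_basis_vec[OF assms(2) assms(2)] by auto

lemma density_zero_diag_row:
  assumes d: "density n M" and z: "M X X = 0"
  shows "M Y X = 0" "M X Y = 0"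
proof -
  show col: "M Y X = 0"
  proof (cases "X \<in> basis_idx n \<and> Y \<in> basis_idx n")
    case True
    then have "sesq n M (basis_vec X) (basis_vec X) = 0" using sesq_basis_vec z by simp
    then have "sesq n M (basis_vec Y) (basis_vec X) = 0" by (rule sesq_eq_0_if_sesq_self_eq_0[OF d])
    then show ?thesis using sesq_basis_vec True by simp
  qed (use density_outside[OF d] in blast)
  show "M X Y = 0"
  proof (cases "X \<in> basis_idx n \<and> Y \<in> basis_idx n")
    case True then show ?thesis using density_hermitian[OF d, of Y X] col by simp
  qed (use density_outside[OF d] in blast)
qed

lemma sum_nonneg_complex_eq_0D:
  fixes z :: "'a \<Rightarrow> complex"
  assumes "finite I" "\<forall>i\<in>I. z i \<in> \<real> \<and> Re (z i) \<ge> 0" "sum z I = 0" "j \<in> I"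
  shows "z j = 0"
proof -
  have "(\<Sum>i\<in>I. Re (z i)) = 0" using assms(3) by (metis Re_sum zero_complex.sel(1))
  then have "\<forall>i\<in>I. Re (z i) = 0"
    using sum_nonneg_eq_0_iff[of I "\<lambda>i. Re (z i)"] assms(1,2) by simp
  then show ?thesis using assms(2,4) by (metis of_real_Re of_real_0)
qed

text \<open>\<open>dicke_diag n a\<close> is \<open>\<Sum>\<^sub>i a\<^sub>i |D\<^sub>n\<^sup>i\<rangle>\<langle>D\<^sub>n\<^sup>i|\<close> for arbitrary real weights \<open>a\<close>, written entrywise.\<close>
definition dicke_diag :: "nat \<Rightarrow> (nat \<Rightarrow> real) \<Rightarrow> qop" where
  "dicke_diag n a = (\<lambda>X Y. if X \<subseteq> {0..<n} \<and> Y \<subseteq> {0..<n} \<and> card X = card Y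
      then complex_of_real (a (card X) / real (n choose card X)) else 0)"

definition layer_trace :: "nat \<Rightarrow> qop \<Rightarrow> nat \<Rightarrow> complex" where
  "layer_trace n M i = (\<Sum>X\<in>subsets_of_card {0..<n} i. M X X)"

lemma dicke_mixture_eq_dicke_diag:
  assumes "k \<le> n"
  shows "dicke_mixture n k lam = dicke_diag n (\<lambda>i. if i \<le> k then lam i else 0)"
proof (intro ext)
  fix A B
  show "dicke_mixture n k lam A B = dicke_diag n (\<lambda>i. if i \<le> k then lam i else 0) A B"
  proof (cases "A \<subseteq> {0..<n} \<and> B \<subseteq> {0..<n} \<and> card A = card B \<and> card A \<le> k")
    case True
    have pos: "real (n choose card A) > 0"
      using True card_mono[of "{0..<n}" A] by simp
    have "dicke_mixture n k lam A B
        = (\<Sum>i\<le>k. if i = card A then complex_of_real (lam i / real (n choose i)) else 0)"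
      unfolding dicke_mixture_def
    proof (rule sum.cong)
      fix i assume "i \<in> {..k}"
      show "complex_of_real (lam i) * dicke n i A * cnj (dicke n i B) =
         (if i = card A then complex_of_real (lam i / real (n choose i)) else 0)"
      proof (cases "i = card A")
        case i: True
        have "complex_of_real (1 / sqrt (real (n choose i))) * cnj (complex_of_real (1 / sqrt (real (n choose i))))
             = complex_of_real (1 / real (n choose i))"
          using pos i by (simp add: of_real_mult[symmetric] del: of_real_mult)
        then show ?thesis using True i unfolding dicke_def basis_idx_def
          by (simp add: divide_inverse)
      qed (use True in \<open>auto simp: dicke_def\<close>)
    qed simp
    then show ?thesis using True unfolding dicke_diag_def by (simp add: sum.delta)
  next
    case False
    then have "dicke_mixture n k lam A B = 0"
      unfolding dicke_mixture_def by (intro sum.neutral) (auto simp: dicke_def basis_idx_def)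
    then show ?thesis using False by (auto simp: dicke_diag_def)
  qed
qed

lemma dicke_diag_subsets_of_card:
  assumes "A \<in> subsets_of_card {0..<n} i" "B \<in> subsets_of_card {0..<n} j"
  shows "dicke_diag n a A B = (if i = j then complex_of_real (a i / real (n choose i)) else 0)"
  using assms by (auto simp: dicke_diag_def subsets_of_card_def)

lemma layer_trace_dicke_diag:
  assumes "i \<le> n"
  shows "layer_trace n (dicke_diag n a) i = complex_of_real (a i)"
proof -
  have "layer_trace n (dicke_diag n a) i
      = (\<Sum>X\<in>subsets_of_card {0..<n} i. complex_of_real (a i / real (n choose i)))"
    unfolding layer_trace_def by (intro sum.cong refl) (simp add: dicke_diag_subsets_of_card)
  then show ?thesis using assms by (simp add: card_subsets_of_card)
qed

lemma sesq_dicke_diag: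
  "sesq n (dicke_diag n a) v v
     = (\<Sum>i\<le>n. complex_of_real (a i / real (n choose i) * (cmod (\<Sum>X\<in>subsets_of_card {0..<n} i. v X))\<^sup>2))"
proof -
  let ?L = "subsets_of_card {0..<n}"
  let ?c = "\<lambda>i. complex_of_real (a i / real (n choose i))"
  have "sesq n (dicke_diag n a) v v
      = (\<Sum>i\<le>n. \<Sum>A\<in>?L i. \<Sum>j\<le>n. \<Sum>B\<in>?L j. cnj (v A) * dicke_diag n a A B * v B)"
    unfolding sesq_def basis_idx_def sum_Pow_atLeastLessThan_by_card ..
  also have "\<dots> = (\<Sum>i\<le>n. \<Sum>A\<in>?L i. \<Sum>j\<le>n. if j = i then (\<Sum>B\<in>?L i. cnj (v A) * ?c i * v B) else 0)"
    by (intro sum.cong refl) (auto simp: dicke_diag_subsets_of_card)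
  also have "\<dots> = (\<Sum>i\<le>n. ?c i * (cnj (\<Sum>X\<in>?L i. v X) * (\<Sum>X\<in>?L i. v X)))"
    by (simp add: sum.delta sum_distrib_left sum_distrib_right algebra_simps)
  also have "\<dots> = (\<Sum>i\<le>n. complex_of_real (a i / real (n choose i) * (cmod (\<Sum>X\<in>?L i. v X))\<^sup>2))"
    by (intro sum.cong refl) (simp add: complex_norm_square mult.commute del: cnj_sum of_real_power)
  finally show ?thesis .
qed

lemma density_dicke_diag:
  assumes "\<forall>i\<le>n. a i \<ge> 0" "(\<Sum>i\<le>n. a i) = 1"
  shows "density n (dicke_diag n a)"
  unfolding density_def
proof (intro conjI allI impI ballI)
  fix A B assume "A \<notin> basis_idx n \<or> B \<notin> basis_idx n"
  then show "dicke_diag n a A B = 0" by (auto simp: dicke_diag_def basis_idx_def)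
next
  fix A B assume "A \<in> basis_idx n" "B \<in> basis_idx n"
  then show "dicke_diag n a B A = cnj (dicke_diag n a A B)" by (auto simp: dicke_diag_def)
next
  fix v :: "nat set \<Rightarrow> complex"
  have "(\<Sum>i\<le>n. a i / real (n choose i) * (cmod (\<Sum>X\<in>subsets_of_card {0..<n} i. v X))\<^sup>2) \<ge> 0"
    using assms(1) by (intro sum_nonneg) auto
  then show "(\<Sum>A\<in>basis_idx n. \<Sum>B\<in>basis_idx n. cnj (v A) * dicke_diag n a A B * v B) \<in> \<real>"
    and "Re (\<Sum>A\<in>basis_idx n. \<Sum>B\<in>basis_idx n. cnj (v A) * dicke_diag n a A B * v B) \<ge> 0"
    using sesq_dicke_diag[of n a v] unfolding sesq_def by (simp_all flip: of_real_sum)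
next
  have "(\<Sum>A\<in>basis_idx n. dicke_diag n a A A) = (\<Sum>i\<le>n. layer_trace n (dicke_diag n a) i)"
    unfolding basis_idx_def layer_trace_def by (rule sum_Pow_atLeastLessThan_by_card)
  also have "\<dots> = complex_of_real (\<Sum>i\<le>n. a i)"
    by (simp add: layer_trace_dicke_diag)
  finally show "(\<Sum>A\<in>basis_idx n. dicke_diag n a A A) = 1" using assms(2) by simp
qed

text \<open>\<open>traced_weight n a m t\<close> is the diagonal entry, at any \<open>t\<close>-element subset, of the marginal
  of \<open>dicke_diag n a\<close> on \<open>n - m\<close> qubits (so \<open>m\<close> qubits are traced out).\<close>
definition traced_weight :: "nat \<Rightarrow> (nat \<Rightarrow> real) \<Rightarrow> nat \<Rightarrow> nat \<Rightarrow> real" where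
  "traced_weight n a m t = (\<Sum>j\<le>m. real (m choose j) * (a (t + j) / real (n choose (t + j))))"

lemma marginal_dicke_diag:
  assumes "S \<subseteq> {0..<n}" "A \<subseteq> S" "B \<subseteq> S"
  shows "marginal n (dicke_diag n a) S A B
       = (if card A = card B then complex_of_real (traced_weight n a (n - card S) (card A)) else 0)"
proof -
  let ?T = "{0..<n} - S"
  have fin: "finite ?T" by simp
  have cS: "card ?T = n - card S"
    using assms(1) by (simp add: card_Diff_subset finite_subset)
  have fA: "finite A" "finite B" using assms by (meson finite_atLeastLessThan finite_subset)+
  let ?f = "\<lambda>j. complex_of_real (a (card A + j) / real (n choose (card A + j)))"
  have "marginal n (dicke_diag n a) S A B = (\<Sum>C\<in>Pow ?T. dicke_diag n a (A \<union> C) (B \<union> C))"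
    using assms by (simp add: marginal_def)
  also have "\<dots> = (\<Sum>C\<in>Pow ?T. if card A = card B then ?f (card C) else 0)"
  proof (intro sum.cong refl)
    fix C assume C: "C \<in> Pow ?T"
    have "finite C" using C finite_subset fin by auto
    moreover have "A \<inter> C = {}" "B \<inter> C = {}" using C assms by auto
    ultimately have "card (A \<union> C) = card A + card C" "card (B \<union> C) = card B + card C"
      using card_Un_disjoint fA by auto
    moreover have "A \<union> C \<subseteq> {0..<n}" "B \<union> C \<subseteq> {0..<n}" using assms C by auto
    ultimately show "dicke_diag n a (A \<union> C) (B \<union> C) = (if card A = card B then ?f (card C) else 0)"
      by (simp add: dicke_diag_def)
  qed
  also have "\<dots> = (if card A = card B then complex_of_real (traced_weight n a (n - card S) (card A)) else 0)"
  proof (cases "card A = card B")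
    case True
    have "(\<Sum>C\<in>Pow ?T. ?f (card C)) = (\<Sum>j\<le>n - card S. of_nat ((n - card S) choose j) * ?f j)"
      using sum_Pow_card_fun[OF fin, of ?f] cS by simp
    then show ?thesis using True by (simp add: traced_weight_def of_real_sum)
  qed simp
  finally show ?thesis .
qed

text \<open>Pascal's rule: tracing out one more qubit adds the weights of its two states.\<close>
lemma traced_weight_Suc:
  "traced_weight n a (Suc m) t = traced_weight n a m t + traced_weight n a m (Suc t)"
proof -
  let ?f = "\<lambda>i. a i / real (n choose i)"
  have "traced_weight n a (Suc m) t = ?f t + (\<Sum>j\<le>m. real (Suc m choose Suc j) * ?f (t + Suc j))"
    unfolding traced_weight_def by (subst sum.atMost_Suc_shift) simp
  moreover have "traced_weight n a m t = ?f t + (\<Sum>j\<le>m. real (m choose Suc j) * ?f (t + Suc j))"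
  proof -
    have "traced_weight n a m t = (\<Sum>j\<le>Suc m. real (m choose j) * ?f (t + j))"
      unfolding traced_weight_def by simp
    then show ?thesis by (subst (asm) sum.atMost_Suc_shift) simp
  qed
  moreover have "traced_weight n a m (Suc t) = (\<Sum>j\<le>m. real (m choose j) * ?f (t + Suc j))"
    unfolding traced_weight_def by simp
  moreover have "(\<Sum>j\<le>m. real (Suc m choose Suc j) * ?f (t + Suc j))
      = (\<Sum>j\<le>m. real (m choose j) * ?f (t + Suc j)) + (\<Sum>j\<le>m. real (m choose Suc j) * ?f (t + Suc j))"
    by (simp only: binomial_Suc_Suc of_nat_add distrib_right sum.distrib)
  ultimately show ?thesis by simp
qed

lemma sum_coef_eq_traced_weight:
  assumes "s \<le> k" "k \<le> n"
  shows "(\<Sum>i\<le>n. a i * coef n k i s) = real (k choose s) * traced_weight n a (n - k) s"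
proof -
  let ?F = "\<lambda>i. a i * coef n k i s"
  have "(\<Sum>i\<le>n. ?F i) = (\<Sum>i\<in>{s..n}. ?F i)"
    by (rule sum.mono_neutral_right) (auto simp: coef_def ibinom_def)
  also have "\<dots> = (\<Sum>j\<le>n - s. ?F (s + j))"
  proof -
    have "x \<in> (\<lambda>j. s + j) ` {..n - s}" if "x \<in> {s..n}" for x
      using that image_eqI[of x "\<lambda>j. s + j" "x - s"] by auto
    then have "{s..n} = (\<lambda>j. s + j) ` {..n - s}" using assms by auto
    then show ?thesis by (simp add: sum.reindex inj_on_def)
  qed
  also have "\<dots> = (\<Sum>j\<le>n - s. real (k choose s) * (real ((n - k) choose j) * (a (s + j) / real (n choose (s + j)))))"
    by (intro sum.cong refl) (simp add: coef_def ibinom_def)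
  also have "\<dots> = (\<Sum>j\<le>n - k. real (k choose s) * (real ((n - k) choose j) * (a (s + j) / real (n choose (s + j)))))"
    by (rule sum.mono_neutral_right) (use assms in auto)
  also have "\<dots> = real (k choose s) * traced_weight n a (n - k) s"
    by (simp add: traced_weight_def sum_distrib_left)
  finally show ?thesis .
qed

lemma traced_weight_all: "traced_weight n a n 0 = (\<Sum>j\<le>n. a j)"
  unfolding traced_weight_def by (intro sum.cong refl) auto

lemma traced_weight_eq_below:
  assumes "k \<le> n" "\<forall>s\<le>k. traced_weight n a (n - k) s = traced_weight n b (n - k) s"
    and "m \<le> k" "t \<le> m"
  shows "traced_weight n a (n - m) t = traced_weight n b (n - m) t"
proof -
  have "\<forall>t\<le>k - d. traced_weight n a (n - (k - d)) t = traced_weight n b (n - (k - d)) t"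
    if "d \<le> k" for d
    using that
  proof (induction d)
    case 0 then show ?case using assms(2) by simp
  next
    case (Suc d)
    then have "n - (k - Suc d) = Suc (n - (k - d))" "k - d = Suc (k - Suc d)"
      using assms(1) by auto
    with Suc show ?case by (simp add: traced_weight_Suc)
  qed
  from this[of "k - m"] show ?thesis using assms(3,4) by simp
qed

lemma marginal_full_set:
  assumes "density n \<tau>"
  shows "marginal n \<tau> {0..<n} = \<tau>"
proof (intro ext)
  fix A B
  show "marginal n \<tau> {0..<n} A B = \<tau> A B"
    using density_outside[OF assms, of A B] by (auto simp: marginal_def basis_idx_def)
qed

lemma determines_full_set: "density n \<rho> \<Longrightarrow> determines n {{0..<n}} \<rho>"
  unfolding determines_def compatible_def using marginal_full_set by auto

lemma Lnum_le_obtains_family: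
  assumes "density n \<rho>" "Lnum n \<rho> \<le> k"
  obtains \<S> where "determines n \<S> \<rho>" "\<forall>S\<in>\<S>. card S \<le> k"
proof -
  let ?P = "\<lambda>m. \<exists>\<S>. determines n \<S> \<rho> \<and> (\<forall>S\<in>\<S>. card S \<le> m)"
  have "?P n" using determines_full_set[OF assms(1)] by (intro exI[of _ "{{0..<n}}"]) auto
  then have "?P (Lnum n \<rho>)" unfolding Lnum_def by (rule LeastI)
  then show ?thesis using assms(2) that by (meson le_trans)
qed

lemma Lnum_le_if_determines:
  assumes "determines n \<S> \<rho>" "\<forall>S\<in>\<S>. card S \<le> k"
  shows "Lnum n \<rho> \<le> k"
  unfolding Lnum_def by (rule Least_le) (use assms in blast)

definition solves_marginal_system :: "nat \<Rightarrow> nat \<Rightarrow> (nat \<Rightarrow> real) \<Rightarrow> (nat \<Rightarrow> real) \<Rightarrow> bool" where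
  "solves_marginal_system n k b a \<longleftrightarrow>
     (\<forall>s\<le>k. (\<Sum>i\<le>n. a i * coef n k i s) = (\<Sum>i\<le>n. b i * coef n k i s))"

definition unique_nonneg_solution :: "nat \<Rightarrow> nat \<Rightarrow> (nat \<Rightarrow> real) \<Rightarrow> bool" where
  "unique_nonneg_solution n k b \<longleftrightarrow>
     (\<forall>a. (\<forall>i\<le>n. 0 \<le> a i) \<and> solves_marginal_system n k b a \<longrightarrow> (\<forall>i\<le>n. a i = b i))"

lemma solves_marginal_system_iff_traced_weight:
  assumes "k \<le> n"
  shows "solves_marginal_system n k b a
     \<longleftrightarrow> (\<forall>s\<le>k. traced_weight n a (n - k) s = traced_weight n b (n - k) s)"
  unfolding solves_marginal_system_def using assms by (simp add: sum_coef_eq_traced_weight)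

lemma marginal_dicke_diag_eq:
  assumes "k \<le> n" "solves_marginal_system n k b a" "S \<subseteq> {0..<n}" "card S \<le> k"
  shows "marginal n (dicke_diag n a) S = marginal n (dicke_diag n b) S"
proof (intro ext)
  fix A B
  show "marginal n (dicke_diag n a) S A B = marginal n (dicke_diag n b) S A B"
  proof (cases "A \<subseteq> S \<and> B \<subseteq> S")
    case True
    then have "card A \<le> card S" using assms(3) by (meson card_mono finite_atLeastLessThan finite_subset)
    then have "traced_weight n a (n - card S) (card A) = traced_weight n b (n - card S) (card A)"
      using traced_weight_eq_below[OF assms(1)] assms(2,4)
      unfolding solves_marginal_system_iff_traced_weight[OF assms(1)] by blast
    then show ?thesis using True by (auto simp: marginal_dicke_diag[OF assms(3)])
  qed (auto simp: marginal_def)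
qed

lemma unique_nonneg_solution_if_Lnum_le:
  assumes "k \<le> n" "\<forall>i\<le>n. 0 \<le> b i" "(\<Sum>i\<le>n. b i) = 1"
    and "Lnum n (dicke_diag n b) \<le> k"
  shows "unique_nonneg_solution n k b"
  unfolding unique_nonneg_solution_def
proof (rule allI, rule impI, elim conjE)
  fix a assume a_nonneg: "\<forall>i\<le>n. 0 \<le> a i" and a_sol: "solves_marginal_system n k b a"
  obtain \<S> where det: "determines n \<S> (dicke_diag n b)" and small: "\<forall>S\<in>\<S>. card S \<le> k"
    using Lnum_le_obtains_family[OF density_dicke_diag[OF assms(2,3)] assms(4)] .
  have "traced_weight n a n 0 = traced_weight n b n 0"
    using traced_weight_eq_below[OF assms(1), of a b 0 0] a_sol assms(1)
    by (simp add: solves_marginal_system_iff_traced_weight)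
  then have "(\<Sum>i\<le>n. a i) = 1" using assms(3) by (simp add: traced_weight_all)
  moreover have "\<S> \<subseteq> Pow {0..<n}" using det by (simp add: determines_def)
  ultimately have "dicke_diag n a \<in> compatible n (dicke_diag n b) \<S>"
    using density_dicke_diag[OF a_nonneg] small marginal_dicke_diag_eq[OF assms(1) a_sol]
    unfolding compatible_def by auto
  then have "dicke_diag n a = dicke_diag n b" using det unfolding determines_def by auto
  then show "\<forall>i\<le>n. a i = b i" using layer_trace_dicke_diag by (metis of_real_eq_iff)
qed

lemma sum_marginal_diag:
  assumes S: "S \<subseteq> {0..<n}"
  shows "(\<Sum>A\<in>subsets_of_card S s. marginal n \<tau> S A A)
       = (\<Sum>X\<in>{X \<in> Pow {0..<n}. card (X \<inter> S) = s}. \<tau> X X)"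
proof -
  let ?h = "\<lambda>(A, C). A \<union> C"
  let ?T = "subsets_of_card S s \<times> Pow ({0..<n} - S)"
  have inj: "inj_on ?h ?T"
    by (rule inj_on_union_split[where S=S]) (auto simp: subsets_of_card_def)
  have img: "?h ` ?T = {X \<in> Pow {0..<n}. card (X \<inter> S) = s}"
  proof
    show "?h ` ?T \<subseteq> {X \<in> Pow {0..<n}. card (X \<inter> S) = s}"
    proof
      fix x assume "x \<in> ?h ` ?T"
      then obtain A C where "x = A \<union> C" "A \<in> subsets_of_card S s" "C \<in> Pow ({0..<n} - S)" by auto
      moreover from this have "(A \<union> C) \<inter> S = A" by (auto simp: subsets_of_card_def)
      ultimately show "x \<in> {X \<in> Pow {0..<n}. card (X \<inter> S) = s}"
        using S by (auto simp: subsets_of_card_def)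
    qed
    show "{X \<in> Pow {0..<n}. card (X \<inter> S) = s} \<subseteq> ?h ` ?T"
    proof
      fix X assume "X \<in> {X \<in> Pow {0..<n}. card (X \<inter> S) = s}"
      then have "X = ?h (X \<inter> S, X - S)" "(X \<inter> S, X - S) \<in> ?T" by (auto simp: subsets_of_card_def)
      then show "X \<in> ?h ` ?T" by blast
    qed
  qed
  have "(\<Sum>A\<in>subsets_of_card S s. marginal n \<tau> S A A)
      = (\<Sum>A\<in>subsets_of_card S s. \<Sum>C\<in>Pow ({0..<n} - S). \<tau> (A \<union> C) (A \<union> C))"
    by (intro sum.cong refl) (auto simp: marginal_def subsets_of_card_def)
  also have "\<dots> = (\<Sum>(A, C)\<in>?T. \<tau> (A \<union> C) (A \<union> C))"
    by (rule sum.cartesian_product)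
  also have "\<dots> = (\<Sum>X\<in>?h ` ?T. \<tau> X X)"
    using inj by (simp add: sum.reindex case_prod_unfold)
  finally show ?thesis unfolding img .
qed

text \<open>Double counting: summing the \<open>s\<close>-th diagonal layer of all \<open>k\<close>-qubit marginals counts each
  \<open>i\<close>-element basis set \<open>\<binom>i s \<binom>(n-i) (k-s)\<close> times.\<close>
lemma sum_marginal_diag_layers:
  assumes "s \<le> k" "k \<le> n"
  shows "(\<Sum>S\<in>subsets_of_card {0..<n} k. \<Sum>A\<in>subsets_of_card S s. marginal n \<tau> S A A)
     = of_nat (n choose k) * (\<Sum>i\<le>n. of_real (coef n k i s) * layer_trace n \<tau> i)"
proof -
  let ?N = "\<lambda>i. (i choose s) * ((n - i) choose (k - s))"
  let ?L = "subsets_of_card {0..<n}"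
  have "(\<Sum>S\<in>?L k. \<Sum>A\<in>subsets_of_card S s. marginal n \<tau> S A A)
      = (\<Sum>S\<in>?L k. \<Sum>X\<in>Pow {0..<n}. if card (X \<inter> S) = s then \<tau> X X else 0)"
  proof (rule sum.cong[OF refl])
    fix S assume "S \<in> ?L k"
    then have S: "S \<subseteq> {0..<n}" by (simp add: subsets_of_card_def)
    show "(\<Sum>A\<in>subsets_of_card S s. marginal n \<tau> S A A)
        = (\<Sum>X\<in>Pow {0..<n}. if card (X \<inter> S) = s then \<tau> X X else 0)"
      unfolding sum_marginal_diag[OF S] by (rule sum.inter_filter) simp
  qed
  also have "\<dots> = (\<Sum>X\<in>Pow {0..<n}. \<Sum>S\<in>?L k. if card (X \<inter> S) = s then \<tau> X X else 0)"
    by (rule sum.swap)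
  also have "\<dots> = (\<Sum>X\<in>Pow {0..<n}. of_nat (?N (card X)) * \<tau> X X)"
  proof (intro sum.cong refl)
    fix X assume "X \<in> Pow {0..<n}"
    then have "card {S \<in> ?L k. card (X \<inter> S) = s} = ?N (card X)"
      using card_subsets_of_card_meeting assms by simp
    then show "(\<Sum>S\<in>?L k. if card (X \<inter> S) = s then \<tau> X X else 0) = of_nat (?N (card X)) * \<tau> X X"
      by (simp add: sum.inter_filter[symmetric] finite_subsets_of_card)
  qed
  also have "\<dots> = (\<Sum>i\<le>n. of_nat (?N i) * layer_trace n \<tau> i)"
    unfolding sum_Pow_atLeastLessThan_by_card layer_trace_def
    by (intro sum.cong refl) (auto simp: subsets_of_card_def sum_distrib_left)
  also have "\<dots> = of_nat (n choose k) * (\<Sum>i\<le>n. of_real (coef n k i s) * layer_trace n \<tau> i)"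
    using assms by (simp add: sum_distrib_left coef_eq_hypergeometric)
  finally show ?thesis .
qed

lemma density_layer_trace:
  assumes "density n \<sigma>"
  shows "layer_trace n \<sigma> i = complex_of_real (Re (layer_trace n \<sigma> i))"
    and "Re (layer_trace n \<sigma> i) \<ge> 0"
proof -
  have diag: "\<sigma> X X \<in> \<real>" "Re (\<sigma> X X) \<ge> 0" if "X \<in> subsets_of_card {0..<n} i" for X
    using density_diag_nonneg[OF assms subsets_of_card_basis_idx[OF that]] by auto
  then have "layer_trace n \<sigma> i \<in> \<real>" unfolding layer_trace_def by (intro sum_in_Reals)
  then show "layer_trace n \<sigma> i = complex_of_real (Re (layer_trace n \<sigma> i))" by (simp add: of_real_Re)
  show "Re (layer_trace n \<sigma> i) \<ge> 0" unfolding layer_trace_def using diag by (simp add: sum_nonneg)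
qed

lemma diag_eq_0_if_layer_trace_eq_0:
  assumes "density n \<sigma>" "X \<subseteq> {0..<n}" "layer_trace n \<sigma> (card X) = 0"
  shows "\<sigma> X X = 0"
proof (rule sum_nonneg_complex_eq_0D[of "subsets_of_card {0..<n} (card X)"])
  show "X \<in> subsets_of_card {0..<n} (card X)" using assms(2) by (simp add: subsets_of_card_def)
  show "\<forall>Y\<in>subsets_of_card {0..<n} (card X). \<sigma> Y Y \<in> \<real> \<and> Re (\<sigma> Y Y) \<ge> 0"
    using density_diag_nonneg[OF assms(1)] subsets_of_card_basis_idx by blast
qed (use assms(3) in \<open>simp_all add: layer_trace_def finite_subsets_of_card\<close>)

lemma solves_marginal_system_layer_trace:
  assumes "k \<le> n" "density n \<sigma>"
    and "\<forall>S\<in>subsets_of_card {0..<n} k. marginal n \<sigma> S = marginal n (dicke_diag n b) S"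
  shows "solves_marginal_system n k b (\<lambda>i. Re (layer_trace n \<sigma> i))"
  unfolding solves_marginal_system_def
proof (intro allI impI)
  fix s assume "s \<le> k"
  have "of_nat (n choose k) * (\<Sum>i\<le>n. of_real (coef n k i s) * layer_trace n \<sigma> i)
      = of_nat (n choose k) * (\<Sum>i\<le>n. of_real (coef n k i s) * layer_trace n (dicke_diag n b) i)"
    using sum_marginal_diag_layers[OF \<open>s \<le> k\<close> assms(1)] assms(3) by (metis (no_types, lifting) sum.cong)
  then have "(\<Sum>i\<le>n. of_real (coef n k i s) * complex_of_real (Re (layer_trace n \<sigma> i)))
      = (\<Sum>i\<le>n. of_real (coef n k i s) * complex_of_real (b i))"
    using assms(1) density_layer_trace(1)[OF assms(2)] by (simp add: layer_trace_dicke_diag)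
  then show "(\<Sum>i\<le>n. Re (layer_trace n \<sigma> i) * coef n k i s) = (\<Sum>i\<le>n. b i * coef n k i s)"
    by (simp flip: of_real_mult of_real_sum add: mult.commute)
qed

lemma layer_trace_eq_if_unique_nonneg_solution:
  assumes "k \<le> n" "density n \<sigma>"
    and "\<forall>S\<in>subsets_of_card {0..<n} k. marginal n \<sigma> S = marginal n (dicke_diag n b) S"
    and "unique_nonneg_solution n k b" "i \<le> n"
  shows "layer_trace n \<sigma> i = complex_of_real (b i)"
  using assms solves_marginal_system_layer_trace[OF assms(1-3)] density_layer_trace[OF assms(2)]
  unfolding unique_nonneg_solution_def by metis

lemma eq_on_equal_card_if_swap_invariant:
  fixes f :: "nat set \<Rightarrow> 'b"
  assumes swap: "\<And>p q C. p < n \<Longrightarrow> q < n \<Longrightarrow> p \<noteq> q \<Longrightarrow> C \<subseteq> {0..<n} - {p, q}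
      \<Longrightarrow> f (insert q C) = f (insert p C)"
  shows "Y \<subseteq> {0..<n} \<Longrightarrow> Y' \<subseteq> {0..<n} \<Longrightarrow> card Y = card Y' \<Longrightarrow> f Y = f Y'"
proof (induction "card (Y - Y')" arbitrary: Y)
  case 0
  have "finite Y" "finite Y'" using 0 finite_subset by auto
  then show ?case using 0 card_subset_eq[of Y' Y] by auto
next
  case (Suc m Y)
  have fin: "finite Y" "finite Y'" using Suc.prems finite_subset by auto
  obtain q where q: "q \<in> Y" "q \<notin> Y'" using Suc.hyps(2) by (metis Diff_eq_empty_iff card_0_eq
      finite_Diff fin(1) nat.distinct(1) subsetI)
  have "\<not> Y' \<subseteq> Y" using card_subset_eq[OF fin(1)] Suc.prems(3) q by metis
  then obtain p where p: "p \<in> Y'" "p \<notin> Y" by blast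
  let ?C = "Y - {q}"
  have Y: "Y = insert q ?C" using q by auto
  have "p < n" "q < n" "p \<noteq> q" "?C \<subseteq> {0..<n} - {p, q}" using p q Suc.prems(1,2) by auto
  then have "f Y = f (insert p ?C)" using swap Y by metis
  also have "\<dots> = f Y'"
  proof (rule Suc.hyps(1))
    show "m = card (insert p ?C - Y')"
      using Suc.hyps(2) q p fin by (simp add: insert_Diff_if Diff_insert2[symmetric])
    show "card (insert p ?C) = card Y'"
      using Suc.prems(3) q p fin card_gt_0_iff[of Y'] by (auto simp: card.insert_remove)
  qed (use Suc.prems p in auto)
  finally show ?case .
qed

lemma sesq_basis_vec_diff:
  assumes "X \<in> basis_idx n" "Y \<in> basis_idx n"
  shows "sesq n M (\<lambda>W. basis_vec X W - basis_vec Y W) (\<lambda>W. basis_vec X W - basis_vec Y W)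
       = M X X - M X Y - M Y X + M Y Y"
  by (simp add: sesq_diff_left sesq_diff_right sesq_basis_vec assms)

text \<open>Pick a \<open>k\<close>-set \<open>S \<supseteq> {p, q}\<close>. In the marginal on \<open>S\<close>, the form of the difference vector is a
  sum of nonnegative forms of \<open>\<sigma>\<close>, one for each extension of \<open>C \<inter> S\<close> outside \<open>S\<close>; it vanishes
  because it does so for the permutation invariant \<open>dicke_diag n b\<close>.\<close>
lemma sesq_swap_vector_eq_0:
  assumes k: "2 \<le> k" "k \<le> n" and d: "density n \<sigma>"
    and mar: "\<forall>S\<in>subsets_of_card {0..<n} k. marginal n \<sigma> S = marginal n (dicke_diag n b) S"
    and pq: "p < n" "q < n" "p \<noteq> q" and C: "C \<subseteq> {0..<n} - {p, q}"
  shows "sesq n \<sigma> (\<lambda>W. basis_vec (insert q C) W - basis_vec (insert p C) W)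
      (\<lambda>W. basis_vec (insert q C) W - basis_vec (insert p C) W) = 0"
proof -
  define w where "w F = (\<lambda>W. basis_vec (insert q F) W - basis_vec (insert p F) W)" for F
  have "k - 2 \<le> card ({0..<n} - {p, q})" using pq k by (simp add: card_Diff_subset)
  then obtain T where T: "T \<subseteq> {0..<n} - {p, q}" "card T = k - 2" "finite T"
    by (rule obtain_subset_with_card_n)
  define S where "S = insert p (insert q T)"
  have "p \<notin> T" "q \<notin> T" using T by auto
  then have S: "S \<subseteq> {0..<n}" "S \<in> subsets_of_card {0..<n} k"
    using T pq k unfolding S_def subsets_of_card_def by auto
  define E where "E = C \<inter> S"
  have ES: "insert q E \<subseteq> S" "insert p E \<subseteq> S" unfolding E_def S_def by auto
  let ?m = "\<lambda>\<tau>. marginal n \<tau> S (insert q E) (insert q E) - marginal n \<tau> S (insert q E) (insert p E)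
     - marginal n \<tau> S (insert p E) (insert q E) + marginal n \<tau> S (insert p E) (insert p E)"
  have "finite E" "p \<notin> E" "q \<notin> E"
    using C S(1) finite_subset[of E "{0..<n}"] unfolding E_def by auto
  then have "?m (dicke_diag n b) = 0" using marginal_dicke_diag[OF S(1)] ES by simp
  moreover have "?m \<sigma> = (\<Sum>D\<in>Pow ({0..<n} - S). sesq n \<sigma> (w (E \<union> D)) (w (E \<union> D)))"
  proof -
    have "?m \<sigma> = (\<Sum>D\<in>Pow ({0..<n} - S). \<sigma> (insert q E \<union> D) (insert q E \<union> D)
        - \<sigma> (insert q E \<union> D) (insert p E \<union> D) - \<sigma> (insert p E \<union> D) (insert q E \<union> D)
        + \<sigma> (insert p E \<union> D) (insert p E \<union> D))"
      using ES by (simp add: marginal_def sum.distrib sum_subtractf)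
    also have "\<dots> = (\<Sum>D\<in>Pow ({0..<n} - S). sesq n \<sigma> (w (E \<union> D)) (w (E \<union> D)))"
    proof (rule sum.cong[OF refl])
      fix D assume "D \<in> Pow ({0..<n} - S)"
      then have "insert q (E \<union> D) \<in> basis_idx n" "insert p (E \<union> D) \<in> basis_idx n"
        using C pq unfolding E_def S_def basis_idx_def by auto
      then show "\<sigma> (insert q E \<union> D) (insert q E \<union> D) - \<sigma> (insert q E \<union> D) (insert p E \<union> D)
          - \<sigma> (insert p E \<union> D) (insert q E \<union> D) + \<sigma> (insert p E \<union> D) (insert p E \<union> D)
          = sesq n \<sigma> (w (E \<union> D)) (w (E \<union> D))"
        unfolding w_def by (simp add: sesq_basis_vec_diff)
    qed
    finally show ?thesis .
  qed
  moreover have "?m \<sigma> = ?m (dicke_diag n b)" using mar S(2) by simp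
  ultimately have sum_eq_0: "(\<Sum>D\<in>Pow ({0..<n} - S). sesq n \<sigma> (w (E \<union> D)) (w (E \<union> D))) = 0"
    by simp
  have "C - S \<in> Pow ({0..<n} - S)" "E \<union> (C - S) = C" using C unfolding E_def by auto
  then have "sesq n \<sigma> (w C) (w C) = 0"
    using sum_nonneg_complex_eq_0D[OF _ _ sum_eq_0, of "C - S"] sesq_self_nonneg[OF d] by simp
  then show ?thesis unfolding w_def .
qed

lemma density_swap_invariant:
  assumes "2 \<le> k" "k \<le> n" and d: "density n \<sigma>"
    and "\<forall>S\<in>subsets_of_card {0..<n} k. marginal n \<sigma> S = marginal n (dicke_diag n b) S"
    and pq: "p < n" "q < n" "p \<noteq> q" and C: "C \<subseteq> {0..<n} - {p, q}"
  shows "\<sigma> Z (insert q C) = \<sigma> Z (insert p C)"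
proof (cases "Z \<in> basis_idx n")
  case True
  have "insert q C \<in> basis_idx n" "insert p C \<in> basis_idx n"
    using C pq by (auto simp: basis_idx_def)
  moreover have "sesq n \<sigma> (basis_vec Z) (\<lambda>W. basis_vec (insert q C) W - basis_vec (insert p C) W) = 0"
    using sesq_eq_0_if_sesq_self_eq_0[OF d sesq_swap_vector_eq_0[OF assms]] .
  ultimately show ?thesis using True by (simp add: sesq_diff_right sesq_basis_vec)
qed (use density_outside[OF d] in auto)

definition card_invariant :: "nat \<Rightarrow> qop \<Rightarrow> bool" where
  "card_invariant n M \<longleftrightarrow> (\<forall>X Y X' Y'. X \<subseteq> {0..<n} \<longrightarrow> Y \<subseteq> {0..<n} \<longrightarrow> X' \<subseteq> {0..<n} \<longrightarrow>
     Y' \<subseteq> {0..<n} \<longrightarrow> card X = card X' \<longrightarrow> card Y = card Y' \<longrightarrow> M X Y = M X' Y')"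

definition vanishes_above :: "nat \<Rightarrow> qop \<Rightarrow> bool" where
  "vanishes_above k M \<longleftrightarrow> (\<forall>X Y. k < card X \<or> k < card Y \<longrightarrow> M X Y = 0)"

lemma card_invariantD:
  "card_invariant n M \<Longrightarrow> X \<subseteq> {0..<n} \<Longrightarrow> Y \<subseteq> {0..<n} \<Longrightarrow> X' \<subseteq> {0..<n} \<Longrightarrow> Y' \<subseteq> {0..<n}
    \<Longrightarrow> card X = card X' \<Longrightarrow> card Y = card Y' \<Longrightarrow> M X Y = M X' Y'"
  unfolding card_invariant_def by blast

lemma card_invariant_dicke_diag: "card_invariant n (dicke_diag n b)"
  unfolding card_invariant_def dicke_diag_def by auto

lemma vanishes_above_dicke_diag: "\<forall>i>k. b i = 0 \<Longrightarrow> vanishes_above k (dicke_diag n b)"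
  unfolding vanishes_above_def dicke_diag_def by auto

lemma card_invariant_if_column_invariant:
  assumes d: "density n \<sigma>"
    and col: "\<And>Z Y Y'. Y \<subseteq> {0..<n} \<Longrightarrow> Y' \<subseteq> {0..<n} \<Longrightarrow> card Y = card Y' \<Longrightarrow> \<sigma> Z Y = \<sigma> Z Y'"
  shows "card_invariant n \<sigma>"
  unfolding card_invariant_def
proof (intro allI impI)
  fix X Y X' Y'
  assume sub: "X \<subseteq> {0..<n}" "Y \<subseteq> {0..<n}" "X' \<subseteq> {0..<n}" "Y' \<subseteq> {0..<n}"
    and card: "card X = card X'" "card Y = card Y'"
  have "\<sigma> X Y = \<sigma> X Y'" using col sub card by blast
  also have "\<dots> = cnj (\<sigma> Y' X)" using density_hermitian[OF d, of Y' X] sub by (simp add: basis_idx_def)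
  also have "\<sigma> Y' X = \<sigma> Y' X'" using col sub card by blast
  also have "cnj (\<sigma> Y' X') = \<sigma> X' Y'" using density_hermitian[OF d, of X' Y'] sub by (simp add: basis_idx_def)
  finally show "\<sigma> X Y = \<sigma> X' Y'" .
qed

lemma vanishes_above_if_diag_vanishes:
  assumes d: "density n \<sigma>" and diag: "\<And>X. X \<subseteq> {0..<n} \<Longrightarrow> k < card X \<Longrightarrow> \<sigma> X X = 0"
  shows "vanishes_above k \<sigma>"
  unfolding vanishes_above_def
proof (intro allI impI)
  fix X Y :: "nat set" assume "k < card X \<or> k < card Y"
  then show "\<sigma> X Y = 0"
  proof (cases "X \<subseteq> {0..<n} \<and> Y \<subseteq> {0..<n}")
    case True
    with \<open>k < card X \<or> k < card Y\<close> show ?thesis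
      using diag density_zero_diag_row[OF d] by blast
  qed (use density_outside[OF d] in \<open>auto simp: basis_idx_def\<close>)
qed

text \<open>Entry \<open>(X, Y)\<close> of the marginal on \<open>{0..<k}\<close>, taken at the initial segments of sizes
  \<open>|X|\<close> and \<open>|Y|\<close>, is \<open>M X Y\<close> plus entries whose index sets are strictly larger; so the
  entries are determined by downward induction on \<open>|X| + |Y|\<close>.\<close>
lemma eq_if_initial_marginal_eq:
  assumes "k \<le> n" "card_invariant n \<sigma>" "card_invariant n \<tau>"
    and "vanishes_above k \<sigma>" "vanishes_above k \<tau>"
    and mar: "marginal n \<sigma> {0..<k} = marginal n \<tau> {0..<k}"
  shows "X \<subseteq> {0..<n} \<Longrightarrow> Y \<subseteq> {0..<n} \<Longrightarrow> \<sigma> X Y = \<tau> X Y"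
proof (induction "2 * n - (card X + card Y)" arbitrary: X Y rule: less_induct)
  case (less X Y)
  show ?case
  proof (cases "k < card X \<or> k < card Y")
    case True
    then show ?thesis using assms(4,5) by (auto simp: vanishes_above_def)
  next
    case False
    let ?S = "{0..<k}" and ?A = "{0..<card X}" and ?B = "{0..<card Y}"
    have AB: "?A \<subseteq> ?S" "?B \<subseteq> ?S" "?S \<subseteq> {0..<n}" using False assms(1) by auto
    let ?P = "Pow ({0..<n} - ?S) - {{}}"
    have larger: "\<sigma> (?A \<union> C) (?B \<union> C) = \<tau> (?A \<union> C) (?B \<union> C)" if C: "C \<in> ?P" for C
    proof -
      have sub: "?A \<union> C \<subseteq> {0..<n}" "?B \<union> C \<subseteq> {0..<n}" using C AB by auto
      have "C \<subseteq> {0..<n}" "C \<noteq> {}" using C by auto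
      then have "finite C" "C \<noteq> {}" using finite_subset by auto
      moreover have "?A \<inter> C = {}" "?B \<inter> C = {}" using C AB by auto
      ultimately have "card (?A \<union> C) = card X + card C" "card (?B \<union> C) = card Y + card C" "card C > 0"
        by (simp_all add: card_Un_disjoint card_gt_0_iff)
      moreover have "card (?A \<union> C) \<le> n" "card (?B \<union> C) \<le> n"
        using card_mono[OF finite_atLeastLessThan sub(1)] card_mono[OF finite_atLeastLessThan sub(2)] by simp_all
      ultimately have "2 * n - (card (?A \<union> C) + card (?B \<union> C)) < 2 * n - (card X + card Y)"
        by linarith
      then show ?thesis using less.hyps[OF _ sub] by simp
    qed
    have split: "marginal n M ?S ?A ?B = M ?A ?B + (\<Sum>C\<in>?P. M (?A \<union> C) (?B \<union> C))" for M
      using AB sum.remove[of "Pow ({0..<n} - ?S)" "{}" "\<lambda>C. M (?A \<union> C) (?B \<union> C)"]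
      by (simp add: marginal_def)
    have "\<sigma> ?A ?B = \<tau> ?A ?B"
      using mar split[of \<sigma>] split[of \<tau>] sum.cong[OF refl larger, of ?P] by simp
    moreover have "\<sigma> X Y = \<sigma> ?A ?B" "\<tau> X Y = \<tau> ?A ?B"
      using card_invariantD[OF assms(2), of X Y ?A ?B] card_invariantD[OF assms(3), of X Y ?A ?B]
        less.prems AB by auto
    ultimately show ?thesis by simp
  qed
qed

text \<open>Moving half of the weight of \<open>|D\<^sub>n\<^sup>1\<rangle>\<close> to each of \<open>|D\<^sub>n\<^sup>0\<rangle>\<close> and \<open>|D\<^sub>n\<^sup>2\<rangle>\<close> leaves all
  one-qubit marginals unchanged.\<close>
lemma unique_nonneg_solution_one_imp_weight_one_eq_0:
  assumes n: "2 \<le> n" and b: "0 \<le> b 0" "0 \<le> b 1" "\<forall>i>1. b i = 0"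
    and unique: "unique_nonneg_solution n 1 b"
  shows "b 1 = 0"
proof -
  define a :: "nat \<Rightarrow> real" where
    "a i = (if i = 0 then b 0 + b 1 / 2 else if i = 2 then b 1 / 2 else 0)" for i
  have coef: "coef n 1 i s = real (i choose s) * real ((n - i) choose (1 - s)) / real n"
    if "i \<le> n" "s \<le> 1" for i s
    using coef_eq_hypergeometric[OF that] n by simp
  have "solves_marginal_system n 1 b a"
    unfolding solves_marginal_system_def
  proof (intro allI impI)
    fix s :: nat assume s: "s \<le> 1"
    have "(\<Sum>i\<le>n. a i * coef n 1 i s) = (\<Sum>i\<in>{0, 2}. a i * coef n 1 i s)"
      by (rule sum.mono_neutral_right) (use n in \<open>auto simp: a_def\<close>)
    then have lhs: "(\<Sum>i\<le>n. a i * coef n 1 i s) = a 0 * coef n 1 0 s + a 2 * coef n 1 2 s" by simp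
    have "(\<Sum>i\<le>n. b i * coef n 1 i s) = (\<Sum>i\<in>{0, 1}. b i * coef n 1 i s)"
      by (rule sum.mono_neutral_right) (use n b(3) in auto)
    then have rhs: "(\<Sum>i\<le>n. b i * coef n 1 i s) = b 0 * coef n 1 0 s + b 1 * coef n 1 1 s" by simp
    have n_real: "real (n - 1) = real n - 1" "real (n - 2) = real n - 2" "real n \<noteq> 0" using n by auto
    then have v: "coef n 1 0 0 = 1" "coef n 1 1 0 = (real n - 1) / real n"
      "coef n 1 2 0 = (real n - 2) / real n" "coef n 1 0 1 = 0" "coef n 1 1 1 = 1 / real n"
      "coef n 1 2 1 = 2 / real n"
      using coef[of 0 0] coef[of 1 0] coef[of 2 0] coef[of 0 1] coef[of 1 1] coef[of 2 1] n by auto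
    show "(\<Sum>i\<le>n. a i * coef n 1 i s) = (\<Sum>i\<le>n. b i * coef n 1 i s)"
    proof (cases "s = 0")
      case True
      show ?thesis unfolding lhs rhs
        by (simp only: True v(1-3)) (use n in \<open>simp add: a_def divide_simps algebra_simps\<close>)
    next
      case False
      then have "s = 1" using s by simp
      then show ?thesis unfolding lhs rhs by (simp only: v(4-6)) (simp add: a_def field_simps n_real(3))
    qed
  qed
  moreover have "\<forall>i\<le>n. 0 \<le> a i" using b by (simp add: a_def)
  ultimately have "a 2 = b 2" using unique n unfolding unique_nonneg_solution_def by blast
  then show ?thesis using b(3) by (simp add: a_def)
qed

lemma density_eq_dicke_diag_if_eq_on_basis:
  assumes d: "density n \<sigma>"
    and eq: "\<And>X Y. X \<subseteq> {0..<n} \<Longrightarrow> Y \<subseteq> {0..<n} \<Longrightarrow> \<sigma> X Y = dicke_diag n b X Y"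
  shows "\<sigma> = dicke_diag n b"
proof (intro ext)
  fix X Y
  show "\<sigma> X Y = dicke_diag n b X Y"
  proof (cases "X \<subseteq> {0..<n} \<and> Y \<subseteq> {0..<n}")
    case True
    then show ?thesis by (simp add: eq)
  next
    case False
    then have "\<sigma> X Y = 0" by (intro density_outside[OF d]) (auto simp: basis_idx_def)
    moreover have "dicke_diag n b X Y = 0" using False by (auto simp: dicke_diag_def)
    ultimately show ?thesis by simp
  qed
qed

lemma diag_eq_0_if_marginals_eq:
  assumes "k \<le> n" "unique_nonneg_solution n k b" "density n \<sigma>"
    and "\<forall>S\<in>subsets_of_card {0..<n} k. marginal n \<sigma> S = marginal n (dicke_diag n b) S"
    and X: "X \<subseteq> {0..<n}" "b (card X) = 0"
  shows "\<sigma> X X = 0"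
proof (rule diag_eq_0_if_layer_trace_eq_0[OF assms(3) X(1)])
  have "card X \<le> n" using card_mono[OF finite_atLeastLessThan X(1)] by simp
  then show "layer_trace n \<sigma> (card X) = 0"
    using layer_trace_eq_if_unique_nonneg_solution[OF assms(1,3,4,2)] X(2) by simp
qed

lemma column_invariant_if_marginals_eq:
  assumes k: "1 \<le> k" "k < n"
    and b: "\<forall>i\<le>n. 0 \<le> b i" "\<forall>i>k. b i = 0" and unique: "unique_nonneg_solution n k b"
    and d: "density n \<sigma>"
    and mar: "\<forall>S\<in>subsets_of_card {0..<n} k. marginal n \<sigma> S = marginal n (dicke_diag n b) S"
    and Y: "Y \<subseteq> {0..<n}" "Y' \<subseteq> {0..<n}" "card Y = card Y'"
  shows "\<sigma> Z Y = \<sigma> Z Y'"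
proof (cases "2 \<le> k")
  case True
  have "\<sigma> Z (insert q C) = \<sigma> Z (insert p C)"
    if "p < n" "q < n" "p \<noteq> q" "C \<subseteq> {0..<n} - {p, q}" for p q C
    using density_swap_invariant[OF True less_imp_le[OF k(2)] d mar that] .
  then show ?thesis by (rule eq_on_equal_card_if_swap_invariant[OF _ Y])
next
  case False
  then have "k = 1" using k by simp
  then have "b 1 = 0"
    using unique_nonneg_solution_one_imp_weight_one_eq_0[of n b] b unique k by simp
  have "\<sigma> Z W = 0" if W: "W \<subseteq> {0..<n}" "W \<noteq> {}" for W
  proof (rule density_zero_diag_row(1)[OF d],
      rule diag_eq_0_if_marginals_eq[OF less_imp_le[OF k(2)] unique d mar W(1)])
    have "card W > 0" using W finite_subset[of W "{0..<n}"] by (simp add: card_gt_0_iff)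
    then show "b (card W) = 0" using \<open>b 1 = 0\<close> b(2) \<open>k = 1\<close> by (cases "card W = 1") auto
  qed
  moreover have "Y = {} \<longleftrightarrow> Y' = {}"
    using Y by (metis card_0_eq finite_atLeastLessThan finite_subset)
  ultimately show ?thesis using Y by (cases "Y = {}") auto
qed

lemma eq_dicke_diag_if_marginals_eq:
  assumes k: "1 \<le> k" "k < n"
    and b: "\<forall>i\<le>n. 0 \<le> b i" "\<forall>i>k. b i = 0" and unique: "unique_nonneg_solution n k b"
    and d: "density n \<sigma>"
    and mar: "\<forall>S\<in>subsets_of_card {0..<n} k. marginal n \<sigma> S = marginal n (dicke_diag n b) S"
  shows "\<sigma> = dicke_diag n b"
proof (rule density_eq_dicke_diag_if_eq_on_basis[OF d])
  have "vanishes_above k \<sigma>"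
    using diag_eq_0_if_marginals_eq[OF less_imp_le[OF k(2)] unique d mar] b(2)
    by (intro vanishes_above_if_diag_vanishes[OF d]) simp
  moreover have "card_invariant n \<sigma>"
    using column_invariant_if_marginals_eq[OF assms]
    by (intro card_invariant_if_column_invariant[OF d]) blast
  moreover have "marginal n \<sigma> {0..<k} = marginal n (dicke_diag n b) {0..<k}"
    using mar k by (simp add: subsets_of_card_def)
  ultimately show "\<sigma> X Y = dicke_diag n b X Y" if "X \<subseteq> {0..<n}" "Y \<subseteq> {0..<n}" for X Y
    using eq_if_initial_marginal_eq[OF less_imp_le[OF k(2)] _ card_invariant_dicke_diag _
        vanishes_above_dicke_diag[OF b(2)] _ that] by blast
qed

lemma Lnum_le_if_unique_nonneg_solution:
  assumes "1 \<le> k" "k \<le> n" "\<forall>i\<le>n. 0 \<le> b i" "(\<Sum>i\<le>n. b i) = 1" "\<forall>i>k. b i = 0"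
    and "unique_nonneg_solution n k b"
  shows "Lnum n (dicke_diag n b) \<le> k"
proof (cases "k = n")
  case True
  then show ?thesis
    using Lnum_le_if_determines[OF determines_full_set[OF density_dicke_diag[OF assms(3,4)]]] by simp
next
  case False
  have "compatible n (dicke_diag n b) (subsets_of_card {0..<n} k) = {dicke_diag n b}"
  proof (intro equalityI subsetI)
    fix \<sigma> assume "\<sigma> \<in> compatible n (dicke_diag n b) (subsets_of_card {0..<n} k)"
    then have "\<sigma> = dicke_diag n b"
      using eq_dicke_diag_if_marginals_eq[OF assms(1) _ assms(3,5,6)] False assms(2)
      unfolding compatible_def by simp
    then show "\<sigma> \<in> {dicke_diag n b}" by simp
  qed (use density_dicke_diag[OF assms(3,4)] in \<open>simp add: compatible_def\<close>)
  then have "determines n (subsets_of_card {0..<n} k) (dicke_diag n b)"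
    unfolding determines_def by (auto simp: subsets_of_card_def)
  then show ?thesis by (rule Lnum_le_if_determines) (simp add: subsets_of_card_def)
qed

theorem mainTheorem18:
  fixes n k :: nat and lam :: "nat \<Rightarrow> real"
  assumes "1 \<le> k" and "k \<le> n"
    and "\<forall>i\<le>k. lam i \<ge> 0" and "(\<Sum>i\<le>k. lam i) = 1"
  defines "lam' \<equiv> (\<lambda>i. if i \<le> k then lam i else 0)"
  shows "Lnum n (dicke_mixture n k lam) \<le> k \<longleftrightarrow>
    (\<forall>a :: nat \<Rightarrow> real.
       ((\<forall>i\<le>n. a i \<ge> 0) \<and>
        (\<forall>s\<le>k. (\<Sum>i\<le>n. a i * coef n k i s) = (\<Sum>i\<le>k. lam i * coef n k i s)))
       \<longrightarrow> (\<forall>i\<le>n. a i = lam' i))"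
proof -
  have truncate: "(\<Sum>i\<le>n. lam' i * g i) = (\<Sum>i\<le>k. lam i * g i)" for g :: "nat \<Rightarrow> real"
  proof -
    have "(\<Sum>i\<le>n. lam' i * g i) = (\<Sum>i\<le>k. lam' i * g i)"
      by (rule sum.mono_neutral_right) (use assms(2) in \<open>auto simp: lam'_def\<close>)
    then show ?thesis by (simp add: lam'_def)
  qed
  have nonneg: "\<forall>i\<le>n. 0 \<le> lam' i" and total: "(\<Sum>i\<le>n. lam' i) = 1"
    using assms(3,4) truncate[of "\<lambda>_. 1"] by (simp_all add: lam'_def)
  have "dicke_mixture n k lam = dicke_diag n lam'"
    unfolding lam'_def by (rule dicke_mixture_eq_dicke_diag[OF assms(2)])
  moreover have "(\<forall>a :: nat \<Rightarrow> real. ((\<forall>i\<le>n. a i \<ge> 0) \<and>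
        (\<forall>s\<le>k. (\<Sum>i\<le>n. a i * coef n k i s) = (\<Sum>i\<le>k. lam i * coef n k i s)))
       \<longrightarrow> (\<forall>i\<le>n. a i = lam' i)) \<longleftrightarrow> unique_nonneg_solution n k lam'"
    unfolding unique_nonneg_solution_def solves_marginal_system_def truncate by (rule refl)
  moreover have "\<forall>i>k. lam' i = 0" by (simp add: lam'_def)
  ultimately show ?thesis
    using unique_nonneg_solution_if_Lnum_le[OF assms(2) nonneg total]
      Lnum_le_if_unique_nonneg_solution[OF assms(1,2) nonneg total]
    by (simp only:) blast
qed

end
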